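(* (1) Let $\widetilde A,A,P\in GL_2(\mathbb{C})$, $E\in\mathbb{C}^{2\times 2}$ and $c\in S^1$ satisfy $cP^{*}AP=\widetilde A+E$ and $\|E\|\le \dfrac{|\det\widetilde A|}{8\|\widetilde A\|+4}$. Put $\Delta=\arg\big(\tfrac{\det\widetilde A}{\det A}\big)$. Then there exist $k\in\mathbb{Z}$ and $g\in\mathbb{C}$ with $$c=(-1)^k e^{i\Delta/2}+g,\qquad c^{-1}=(-1)^k e^{-i\Delta/2}+\overline{g},\qquad |g|\le \frac{\|E\|(8\|\widetilde A\|+4)}{|\det\widetilde A|},$$ and $$|\det P|=\Big|\frac{\det\widetilde A}{\det A}\Big|^{1/2}+r,\qquad |r|\le\frac{\|E\|(4\|\widetilde A\|+2)}{\sqrt{|\det\widetilde A\,\det A|}}.$$ (2) Let $F\in\mathbb{C}^{2\times 2}$ and $\widetilde B,B,P\in GL_2(\mathbb{C})$ satisfy $P^{T}BP=\widetilde B+F$ and $\|F\|\le\dfrac{|\det\widetilde B|}{8\|\widetilde B\|+4}$. Then, for a suitable choice of the square root, $$\det P=\sqrt{\frac{\det\widetilde B}{\det B}}+r,\qquad |r|\le\frac{\|F\|(4\|\widetilde B\|+2)}{\sqrt{|\det\widetilde B\,\det B|}}.$$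
   Context: $S^1=\{c\in\mathbb{C}:|c|=1\}$; $P^*$ is the conjugate transpose and $P^T$ the transpose of $P$. For $X=[x_{jk}]\in\mathbb{C}^{2\times 2}$, $\|X\|=\max_{j,k}|x_{jk}|$ is the max norm. $\arg$ denotes an argument of a nonzero complex number. *)

theory Defs
  imports "HOL-Analysis.Analysis"
begin

definition maxnorm :: "complex^2^2 \<Rightarrow> real" where
  "maxnorm X = Max {cmod (X $ j $ k) | j k. True}"

definition conj_transpose :: "complex^2^2 \<Rightarrow> complex^2^2" where
  "conj_transpose P = (\<chi> i j. cnj (P $ j $ i))"

definition scal_mat :: "complex \<Rightarrow> complex^2^2 \<Rightarrow> complex^2^2" where
  "scal_mat c M = (\<chi> i j. c * M $ i $ j)"

end

theory Submission
  imports Defs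
begin

(* Taking determinants of the congruences gives c^2 |det P|^2 det A = det (At + E) and
   (det P)^2 det B = det (Bt + F). For 2x2 matrices |det (X + Y) - det X| is at most
   ||Y|| (4 ||X|| + 2 ||Y||), which the smallness hypothesis turns into a relative error of at
   most 9/16. Everything then rests on one inequality for complex numbers with close squares:
   if Re (p * cnj s) >= 0 then |p - s|^2 (|p|^2 + |s|^2) <= |p^2 - s^2|^2. It is applied to
   det P and a square root of det Bt / det B, to |det P| and |det At / det A|^(1/2), and to
   c e^(-i Delta/2) and the sign +1 or -1 nearest to it. *)

lemma norm_le_maxnorm: "cmod (X $ i $ j) \<le> maxnorm X"
proof -
  have "{cmod (X $ j $ k) | j k. True} = (\<lambda>(j, k). cmod (X $ j $ k)) ` UNIV"
    by auto
  then show ?thesis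
    unfolding maxnorm_def by (intro Max_ge) auto
qed

lemma maxnorm_nonneg: "0 \<le> maxnorm X"
  using norm_le_maxnorm[of X 1 1] norm_ge_zero order_trans by blast

lemma norm_det_le_maxnorm: "cmod (det (X::complex^2^2)) \<le> 2 * (maxnorm X)\<^sup>2"
proof -
  have "cmod (det X) \<le> cmod (X$1$1) * cmod (X$2$2) + cmod (X$1$2) * cmod (X$2$1)"
    unfolding det_2 using norm_triangle_ineq4[of "X$1$1 * X$2$2" "X$1$2 * X$2$1"]
    by (simp add: norm_mult)
  also have "\<dots> \<le> maxnorm X * maxnorm X + maxnorm X * maxnorm X"
    by (intro add_mono mult_mono norm_le_maxnorm maxnorm_nonneg norm_ge_zero)
  finally show ?thesis
    by (simp add: power2_eq_square)
qed

lemma norm_det_add_diff_le: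
  fixes X Y :: "complex^2^2"
  shows "cmod (det (X + Y) - det X) \<le> maxnorm Y * (4 * maxnorm X + 2 * maxnorm Y)"
proof -
  let ?x = "maxnorm X" and ?y = "maxnorm Y"
  let ?t1 = "X$1$1 * Y$2$2" and ?t2 = "Y$1$1 * X$2$2"
    and ?t3 = "X$1$2 * Y$2$1" and ?t4 = "Y$1$2 * X$2$1"
  have prod: "cmod (X$i$j * Y$k$l) \<le> ?x * ?y" "cmod (Y$i$j * X$k$l) \<le> ?x * ?y" for i j k l
    by (simp_all add: norm_mult mult_mono norm_le_maxnorm maxnorm_nonneg)
      (metis mult.commute mult_mono norm_ge_zero norm_le_maxnorm maxnorm_nonneg)
  have "det (X + Y) - det X = (?t1 + ?t2 - ?t3 - ?t4) + det Y"
    unfolding det_2 by (simp add: algebra_simps)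
  also have "cmod \<dots> \<le> cmod ?t1 + cmod ?t2 + cmod ?t3 + cmod ?t4 + cmod (det Y)"
    using norm_triangle_ineq[of "?t1 + ?t2 - ?t3 - ?t4" "det Y"]
      norm_triangle_ineq4[of "?t1 + ?t2 - ?t3" ?t4] norm_triangle_ineq4[of "?t1 + ?t2" ?t3]
      norm_triangle_ineq[of ?t1 ?t2]
    by linarith
  also have "\<dots> \<le> 4 * (?x * ?y) + 2 * ?y\<^sup>2"
    using prod[of 1 1 2 2] prod[of 1 2 2 1] norm_det_le_maxnorm[of Y] by linarith
  finally show ?thesis
    by (simp add: algebra_simps power2_eq_square)
qed

(* The factor 23/16 = 1 + (1 - 9/16) is the one gained back in norm_sqrt_perturbation_le,
   where |p|^2 |beta| >= 7/16 |d| and |s|^2 |beta| = |d|. *)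
lemma det_perturbation_bounds:
  fixes X Y :: "complex^2^2"
  assumes small: "maxnorm Y \<le> cmod (det X) / (8 * maxnorm X + 4)"
  shows "cmod (det (X + Y) - det X) \<le> 9/16 * cmod (det X)"
    and "16 * (cmod (det (X + Y) - det X))\<^sup>2 \<le> 23 * (maxnorm Y * (4 * maxnorm X + 2))\<^sup>2"
proof -
  define a e \<delta> where "a = maxnorm X" and "e = maxnorm Y" and "\<delta> = cmod (det X)"
  have a0: "0 \<le> a" and e0: "0 \<le> e"
    unfolding a_def e_def by (rule maxnorm_nonneg)+
  have e\<delta>: "e * (8 * a + 4) \<le> \<delta>"
    using small a0 unfolding a_def e_def \<delta>_def by (simp add: field_simps)
  moreover have "\<delta> \<le> 2 * a\<^sup>2"
    unfolding \<delta>_def a_def by (rule norm_det_le_maxnorm)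
  ultimately have "e * (8 * a + 4) \<le> 2 * a\<^sup>2"
    by linarith
  have ea: "e \<le> a / 4"
  proof (rule ccontr)
    assume "\<not> e \<le> a / 4"
    then have "a / 4 * (8 * a + 4) < e * (8 * a + 4)"
      using a0 by (intro mult_strict_right_mono) auto
    also have "\<dots> \<le> 2 * a\<^sup>2"
      by fact
    finally show False
      using a0 by (simp add: power2_eq_square algebra_simps)
  qed
  have D: "cmod (det (X + Y) - det X) \<le> e * (4 * a + 2 * e)"
    unfolding a_def e_def by (rule norm_det_add_diff_le)
  have "e * (4 * a + 2 * e) \<le> e * (9/2 * a)"
    using ea e0 by (intro mult_left_mono) auto
  also have "\<dots> \<le> 9/16 * (e * (8 * a + 4))"
    using e0 by (simp add: algebra_simps)
  also have "\<dots> \<le> 9/16 * \<delta>"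
    using e\<delta> by simp
  finally show "cmod (det (X + Y) - det X) \<le> 9/16 * cmod (det X)"
    using D unfolding \<delta>_def by linarith
  have "16 * (4 * a + 2 * e)\<^sup>2 \<le> 16 * (9/2 * a)\<^sup>2"
    using ea e0 by (simp add: power_mono)
  also have "\<dots> \<le> 23 * (4 * a + 2)\<^sup>2"
    using a0 zero_le_power2[of a] by (simp add: power2_eq_square algebra_simps)
  finally have "16 * (4 * a + 2 * e)\<^sup>2 \<le> 23 * (4 * a + 2)\<^sup>2" .
  then have "e\<^sup>2 * (16 * (4 * a + 2 * e)\<^sup>2) \<le> e\<^sup>2 * (23 * (4 * a + 2)\<^sup>2)"
    by (intro mult_left_mono) auto
  then have "16 * (e * (4 * a + 2 * e))\<^sup>2 \<le> 23 * (e * (4 * a + 2))\<^sup>2"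
    by (simp add: power_mult_distrib mult_ac)
  moreover have "(cmod (det (X + Y) - det X))\<^sup>2 \<le> (e * (4 * a + 2 * e))\<^sup>2"
    using D by (intro power_mono) auto
  ultimately show "16 * (cmod (det (X + Y) - det X))\<^sup>2 \<le> 23 * (maxnorm Y * (4 * maxnorm X + 2))\<^sup>2"
    unfolding a_def e_def by linarith
qed

lemma det_conj_transpose: "det (conj_transpose P) = cnj (det P)"
  unfolding det_2 conj_transpose_def by simp

lemma det_scal_mat: "det (scal_mat c M) = c\<^sup>2 * det M"
  unfolding det_2 scal_mat_def by (simp add: algebra_simps power2_eq_square)

lemma det_conj_congruence:
  "det (scal_mat c (conj_transpose P ** A ** P)) = c\<^sup>2 * of_real ((cmod (det P))\<^sup>2) * det A"
proof -
  have "cnj (det P) * det P = of_real ((cmod (det P))\<^sup>2)"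
    by (metis complex_norm_square mult.commute)
  then show ?thesis
    by (simp add: det_scal_mat det_mul det_conj_transpose mult_ac)
qed

lemma det_transpose_congruence:
  fixes P B :: "'a::comm_ring_1^'n^'n"
  shows "det (transpose P ** B ** P) = (det P)\<^sup>2 * det B"
  by (simp add: det_mul det_transpose power2_eq_square)

lemma norm_diff_sq_mult_le:
  fixes p s :: complex
  assumes "0 \<le> Re (p * cnj s)"
  shows "(cmod (p - s))\<^sup>2 * ((cmod p)\<^sup>2 + (cmod s)\<^sup>2) \<le> (cmod (p\<^sup>2 - s\<^sup>2))\<^sup>2"
proof -
  have "(cmod p)\<^sup>2 + (cmod s)\<^sup>2 \<le> (cmod (p + s))\<^sup>2"
    using assms unfolding cmod_power2 by (simp add: power2_eq_square algebra_simps)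
  then have "(cmod (p - s))\<^sup>2 * ((cmod p)\<^sup>2 + (cmod s)\<^sup>2) \<le> (cmod (p - s))\<^sup>2 * (cmod (p + s))\<^sup>2"
    by (intro mult_left_mono) auto
  also have "\<dots> = (cmod ((p - s) * (p + s)))\<^sup>2"
    by (simp add: norm_mult power_mult_distrib)
  also have "(p - s) * (p + s) = p\<^sup>2 - s\<^sup>2"
    by (simp add: power2_eq_square algebra_simps)
  finally show ?thesis .
qed

lemma norm_sgn_minus_one_le: "cmod (sgn z - 1) \<le> 2 * cmod (z - 1)"
proof (cases "z = 0")
  case False
  have "sgn z - z = sgn z * of_real (1 - cmod z)"
    using False by (simp add: sgn_div_norm scaleR_conv_of_real field_simps)
  then have "cmod (sgn z - z) = \<bar>cmod 1 - cmod z\<bar>"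
    using False by (simp add: norm_mult norm_sgn del: of_real_diff)
  also have "\<dots> \<le> cmod (z - 1)"
    using norm_triangle_ineq3[of 1 z] by (simp add: norm_minus_commute)
  finally show ?thesis
    using norm_triangle_ineq[of "sgn z - z" "z - 1"] by simp
qed simp

lemma inverse_eq_cnj_if_norm_one:
  fixes c :: complex
  assumes "cmod c = 1"
  shows "inverse c = cnj c"
proof (rule inverse_unique)
  show "c * cnj c = 1"
    using complex_norm_square[of c] assms by simp
qed

lemma sqrt_cis_approx:
  fixes c w :: complex and \<Delta> :: real
  assumes w: "cmod w = 1" and c: "c\<^sup>2 = cis \<Delta> * w"
  obtains k :: int and g where "c = (-1) powi k * cis (\<Delta> / 2) + g"
    and "inverse c = (-1) powi k * cis (- \<Delta> / 2) + cnj g"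
    and "2 * (cmod g)\<^sup>2 \<le> (cmod (w - 1))\<^sup>2"
proof -
  define v where "v = c * cis (- \<Delta> / 2)"
  have "cis \<Delta> * (cis (- \<Delta> / 2))\<^sup>2 = 1"
    unfolding power2_eq_square cis_mult by simp
  then have v2: "v\<^sup>2 = w"
    unfolding v_def by (simp add: power_mult_distrib c)
  have "(cmod c)\<^sup>2 = 1"
    using arg_cong[OF c, of cmod] w by (simp add: norm_mult norm_power)
  then have c1: "cmod c = 1"
    using norm_ge_zero[of c] by (auto simp: power2_eq_1_iff)
  then have v1: "cmod v = 1"
    by (simp add: v_def norm_mult)
  obtain k :: int and \<sigma> :: complex where \<sigma>: "\<sigma> = (-1) powi k" "\<sigma> = 1 \<or> \<sigma> = -1"
    and acute: "0 \<le> Re (v * cnj \<sigma>)"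
  proof (cases "0 \<le> Re v")
    case True
    then show ?thesis by (intro that[of 1 0]) auto
  next
    case False
    then show ?thesis by (intro that[of "-1" 1]) auto
  qed
  have "2 * (cmod (v - \<sigma>))\<^sup>2 \<le> (cmod (w - 1))\<^sup>2"
    using norm_diff_sq_mult_le[OF acute] v1 v2 \<sigma>(2) by auto
  define g where "g = c - \<sigma> * cis (\<Delta> / 2)"
  have "g = cis (\<Delta> / 2) * (v - \<sigma>)"
    unfolding g_def v_def by (simp add: algebra_simps cis_mult flip: mult.assoc)
  then have "cmod g = cmod (v - \<sigma>)"
    by (simp add: norm_mult)
  show ?thesis
  proof (rule that[of k g])
    show "c = (-1) powi k * cis (\<Delta> / 2) + g"
      unfolding g_def \<sigma>(1) by simp
    show "inverse c = (-1) powi k * cis (- \<Delta> / 2) + cnj g"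
      using inverse_eq_cnj_if_norm_one[OF c1] \<sigma> unfolding g_def by (auto simp: cis_cnj)
    show "2 * (cmod g)\<^sup>2 \<le> (cmod (w - 1))\<^sup>2"
      using \<open>cmod g = cmod (v - \<sigma>)\<close> \<open>2 * (cmod (v - \<sigma>))\<^sup>2 \<le> (cmod (w - 1))\<^sup>2\<close> by simp
  qed
qed

lemma norm_sqrt_perturbation_le:
  fixes p s \<beta> d D :: complex and K :: real
  assumes p: "p\<^sup>2 * \<beta> = d + D" and s: "s\<^sup>2 * \<beta> = d" and acute: "0 \<le> Re (p * cnj s)"
    and "d \<noteq> 0" "\<beta> \<noteq> 0"
    and D_le: "cmod D \<le> 9/16 * cmod d" and D_sq: "16 * (cmod D)\<^sup>2 \<le> 23 * K\<^sup>2" and "0 \<le> K"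
  shows "cmod (p - s) \<le> K / sqrt (cmod (d * \<beta>))"
proof -
  have "cmod d - cmod D \<le> cmod (d + D)"
    using norm_triangle_ineq2[of d "- D"] by simp
  also have "cmod (d + D) = (cmod p)\<^sup>2 * cmod \<beta>"
    by (simp flip: p add: norm_mult norm_power)
  finally have "23/16 * cmod d \<le> ((cmod p)\<^sup>2 + (cmod s)\<^sup>2) * cmod \<beta>"
    using D_le arg_cong[OF s, of cmod] by (simp add: norm_mult norm_power algebra_simps)
  then have "(cmod (p - s))\<^sup>2 * (23/16 * cmod d) * cmod \<beta>
      \<le> (cmod (p - s))\<^sup>2 * (((cmod p)\<^sup>2 + (cmod s)\<^sup>2) * cmod \<beta>) * cmod \<beta>"
    by (intro mult_right_mono mult_left_mono) auto
  also have "\<dots> = (cmod (p - s))\<^sup>2 * ((cmod p)\<^sup>2 + (cmod s)\<^sup>2) * (cmod \<beta>)\<^sup>2"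
    by (simp add: power2_eq_square mult_ac)
  also have "\<dots> \<le> (cmod (p\<^sup>2 - s\<^sup>2))\<^sup>2 * (cmod \<beta>)\<^sup>2"
    by (rule mult_right_mono[OF norm_diff_sq_mult_le[OF acute]]) simp
  also have "\<dots> = (cmod D)\<^sup>2"
    by (simp flip: power_mult_distrib norm_mult add: left_diff_distrib p s)
  finally have "(cmod (p - s))\<^sup>2 * cmod (d * \<beta>) \<le> K\<^sup>2"
    using D_sq by (simp add: norm_mult algebra_simps)
  then have "(cmod (p - s))\<^sup>2 \<le> (K / sqrt (cmod (d * \<beta>)))\<^sup>2"
    using assms(4,5) by (simp add: power_divide field_simps)
  then show ?thesis
    by (rule power2_le_imp_le) (simp add: \<open>0 \<le> K\<close>)
qed

lemma abs_norm_minus_sqrt_le: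
  fixes \<beta> d D :: complex and x K :: real
  assumes eq: "x\<^sup>2 * cmod \<beta> = cmod (d + D)" and "0 \<le> x" and "d \<noteq> 0" "\<beta> \<noteq> 0"
    and D_le: "cmod D \<le> 9/16 * cmod d" and D_sq: "16 * (cmod D)\<^sup>2 \<le> 23 * K\<^sup>2" and "0 \<le> K"
  shows "\<bar>x - sqrt (cmod (d / \<beta>))\<bar> \<le> K / sqrt (cmod (d * \<beta>))"
proof -
  define D' where "D' = cmod (d + D) - cmod d"
  have D'_le: "\<bar>D'\<bar> \<le> cmod D"
    using norm_triangle_ineq3[of "d + D" d] unfolding D'_def by simp
  have "cmod (of_real x - of_real (sqrt (cmod (d / \<beta>))))
      \<le> K / sqrt (cmod (of_real (cmod d) * of_real (cmod \<beta>) :: complex))"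
  proof (rule norm_sqrt_perturbation_le[where D = "of_real D'"])
    have "x\<^sup>2 * cmod \<beta> = cmod d + D'"
      using eq unfolding D'_def by simp
    from arg_cong[OF this, of "of_real :: real \<Rightarrow> complex"]
    show "(of_real x)\<^sup>2 * of_real (cmod \<beta>) = of_real (cmod d) + (of_real D' :: complex)"
      by (simp only: of_real_mult of_real_power of_real_add)
    have "(sqrt (cmod (d / \<beta>)))\<^sup>2 * cmod \<beta> = cmod d"
      using \<open>\<beta> \<noteq> 0\<close> by (simp add: norm_divide)
    from arg_cong[OF this, of "of_real :: real \<Rightarrow> complex"]
    show "(of_real (sqrt (cmod (d / \<beta>))))\<^sup>2 * of_real (cmod \<beta>) = (of_real (cmod d) :: complex)"
      by (simp only: of_real_mult of_real_power)
    show "cmod (of_real D' :: complex) \<le> 9/16 * cmod (of_real (cmod d) :: complex)"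
      using D'_le D_le by simp
    have "\<bar>D'\<bar>\<^sup>2 \<le> (cmod D)\<^sup>2"
      using D'_le by (intro power_mono) auto
    then show "16 * (cmod (of_real D' :: complex))\<^sup>2 \<le> 23 * K\<^sup>2"
      using D_sq by simp
  qed (use assms(2-4,7) in auto)
  then show ?thesis
    by (simp flip: of_real_diff add: norm_mult)
qed

lemma unit_sq_eq_cis_sgn:
  fixes c \<beta> d z :: complex and x \<Delta> :: real
  assumes c1: "cmod c = 1" and "0 \<le> x" and eq: "c\<^sup>2 * of_real x * \<beta> = d * z"
    and arg: "d / \<beta> = of_real (cmod (d / \<beta>)) * cis \<Delta>" and "d \<noteq> 0" "z \<noteq> 0"
  shows "c\<^sup>2 = cis \<Delta> * sgn z"
proof -
  define \<rho> where "\<rho> = cmod (d / \<beta>)"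
  have \<beta>0: "\<beta> \<noteq> 0"
    using eq assms(5,6) by auto
  then have \<rho>0: "0 < \<rho>"
    using \<open>d \<noteq> 0\<close> unfolding \<rho>_def by simp
  have arg': "d / \<beta> = of_real \<rho> * cis \<Delta>"
    unfolding \<rho>_def by (fact arg)
  have "c\<^sup>2 * of_real x = d * z / \<beta>"
    using eq \<beta>0 by (simp add: eq_divide_eq)
  also have "\<dots> = of_real \<rho> * cis \<Delta> * z"
    by (simp flip: arg')
  finally have cx: "c\<^sup>2 * of_real x = of_real \<rho> * cis \<Delta> * z" .
  have "x = \<rho> * cmod z"
    using arg_cong[OF cx, of cmod] c1 \<rho>0 \<open>0 \<le> x\<close> by (simp add: norm_mult norm_power)
  with cx have "of_real \<rho> * (c\<^sup>2 * of_real (cmod z)) = of_real \<rho> * (cis \<Delta> * z)"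
    by (simp add: mult_ac)
  then have "c\<^sup>2 * of_real (cmod z) = cis \<Delta> * z"
    using \<rho>0 by simp
  then show ?thesis
    using \<open>z \<noteq> 0\<close> by (simp add: sgn_eq field_simps)
qed

lemma sqrt_cis_sgn_approx:
  fixes c u :: complex and \<Delta> :: real
  assumes c: "c\<^sup>2 = cis \<Delta> * sgn (1 + u)" and "1 + u \<noteq> 0"
  obtains k :: int and g where "c = (-1) powi k * cis (\<Delta> / 2) + g"
    and "inverse c = (-1) powi k * cis (- \<Delta> / 2) + cnj g"
    and "cmod g \<le> sqrt 2 * cmod u"
proof -
  have "cmod (sgn (1 + u)) = 1"
    using \<open>1 + u \<noteq> 0\<close> by (simp add: norm_sgn)
  then obtain k :: int and g where kg: "c = (-1) powi k * cis (\<Delta> / 2) + g"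
      "inverse c = (-1) powi k * cis (- \<Delta> / 2) + cnj g"
    and g_sq: "2 * (cmod g)\<^sup>2 \<le> (cmod (sgn (1 + u) - 1))\<^sup>2"
    using c by (rule sqrt_cis_approx)
  have "(cmod (sgn (1 + u) - 1))\<^sup>2 \<le> (2 * cmod u)\<^sup>2"
    using norm_sgn_minus_one_le[of "1 + u"] by (intro power_mono) auto
  with g_sq have "(cmod g)\<^sup>2 \<le> (sqrt 2 * cmod u)\<^sup>2"
    by (simp add: power_mult_distrib)
  then have "cmod g \<le> sqrt 2 * cmod u"
    by (rule power2_le_imp_le) simp
  with kg that show ?thesis
    by blast
qed

lemma conj_congruence_det_approx:
  fixes At A P E :: "complex^2^2" and c :: complex and \<Delta> :: real
  assumes "det At \<noteq> 0" "det A \<noteq> 0" and c1: "cmod c = 1"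
    and cong: "scal_mat c (conj_transpose P ** A ** P) = At + E"
    and small: "maxnorm E \<le> cmod (det At) / (8 * maxnorm At + 4)"
    and arg: "det At / det A = of_real (cmod (det At / det A)) * cis \<Delta>"
  shows "(\<exists>(k::int) g. c = (-1) powi k * cis (\<Delta> / 2) + g \<and>
            inverse c = (-1) powi k * cis (- \<Delta> / 2) + cnj g \<and>
            cmod g \<le> maxnorm E * (8 * maxnorm At + 4) / cmod (det At)) \<and>
         (\<exists>r. cmod (det P) = sqrt (cmod (det At / det A)) + r \<and>
            \<bar>r\<bar> \<le> maxnorm E * (4 * maxnorm At + 2) / sqrt (cmod (det At * det A)))"
proof -
  define d \<beta> D K where "d = det At" and "\<beta> = det A" and "D = det (At + E) - det At"
    and "K = maxnorm E * (4 * maxnorm At + 2)"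
  define u where "u = D / d"
  have d0: "d \<noteq> 0" and \<beta>0: "\<beta> \<noteq> 0"
    using assms(1,2) unfolding d_def \<beta>_def by auto
  have D_le: "cmod D \<le> 9/16 * cmod d" and D_sq: "16 * (cmod D)\<^sup>2 \<le> 23 * K\<^sup>2"
    using det_perturbation_bounds[OF small] unfolding d_def D_def K_def by auto
  have K0: "0 \<le> K"
    unfolding K_def using maxnorm_nonneg[of E] maxnorm_nonneg[of At] by simp
  have "cmod u \<le> 9/16"
    using D_le d0 unfolding u_def by (simp add: norm_divide pos_divide_le_eq)
  then have u0: "1 + u \<noteq> 0"
    by (auto simp: add_eq_0_iff)
  have det_eq: "c\<^sup>2 * of_real ((cmod (det P))\<^sup>2) * \<beta> = d + D"
    using arg_cong[OF cong, of det] unfolding d_def \<beta>_def D_def by (simp add: det_conj_congruence)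
  also have "d + D = d * (1 + u)"
    using d0 unfolding u_def by (simp add: field_simps)
  finally have "c\<^sup>2 = cis \<Delta> * sgn (1 + u)"
    using arg d0 u0 unfolding d_def \<beta>_def by (intro unit_sq_eq_cis_sgn[OF c1, where x = "(cmod (det P))\<^sup>2"]) auto
  then obtain k :: int and g where kg: "c = (-1) powi k * cis (\<Delta> / 2) + g"
      "inverse c = (-1) powi k * cis (- \<Delta> / 2) + cnj g"
    and g_le: "cmod g \<le> sqrt 2 * cmod u"
    using u0 by (rule sqrt_cis_sgn_approx)
  have "sqrt 2 * cmod D \<le> 2 * K"
  proof (rule power2_le_imp_le)
    show "(sqrt 2 * cmod D)\<^sup>2 \<le> (2 * K)\<^sup>2"
      using D_sq by (simp add: power_mult_distrib) (use zero_le_power2[of K] in linarith)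
  qed (use K0 in simp)
  with g_le have "cmod g \<le> maxnorm E * (8 * maxnorm At + 4) / cmod (det At)"
    using d0 unfolding u_def K_def d_def by (simp add: norm_divide field_simps)
  with kg have unit_part: "\<exists>(k::int) g. c = (-1) powi k * cis (\<Delta> / 2) + g \<and>
      inverse c = (-1) powi k * cis (- \<Delta> / 2) + cnj g \<and>
      cmod g \<le> maxnorm E * (8 * maxnorm At + 4) / cmod (det At)"
    by blast
  have "cmod (d + D) = cmod (c\<^sup>2 * of_real ((cmod (det P))\<^sup>2) * \<beta>)"
    by (simp only: det_eq)
  then have "(cmod (det P))\<^sup>2 * cmod \<beta> = cmod (d + D)"
    using c1 by (simp add: norm_mult norm_power)
  from abs_norm_minus_sqrt_le[OF this norm_ge_zero d0 \<beta>0 D_le D_sq K0]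
  have "\<exists>r. cmod (det P) = sqrt (cmod (det At / det A)) + r \<and>
      \<bar>r\<bar> \<le> maxnorm E * (4 * maxnorm At + 2) / sqrt (cmod (det At * det A))"
    unfolding d_def \<beta>_def K_def by (intro exI[of _ "cmod (det P) - sqrt (cmod (det At / det A))"]) simp
  with unit_part show ?thesis ..
qed

lemma transpose_congruence_det_approx:
  fixes Bt B P F :: "complex^2^2"
  assumes "det Bt \<noteq> 0" "det B \<noteq> 0"
    and cong: "transpose P ** B ** P = Bt + F"
    and small: "maxnorm F \<le> cmod (det Bt) / (8 * maxnorm Bt + 4)"
  shows "\<exists>s r. s\<^sup>2 = det Bt / det B \<and> det P = s + r \<and>
           cmod r \<le> maxnorm F * (4 * maxnorm Bt + 2) / sqrt (cmod (det Bt * det B))"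
proof -
  define d \<beta> D K where "d = det Bt" and "\<beta> = det B" and "D = det (Bt + F) - det Bt"
    and "K = maxnorm F * (4 * maxnorm Bt + 2)"
  have d0: "d \<noteq> 0" and \<beta>0: "\<beta> \<noteq> 0"
    using assms(1,2) unfolding d_def \<beta>_def by auto
  have D_le: "cmod D \<le> 9/16 * cmod d" and D_sq: "16 * (cmod D)\<^sup>2 \<le> 23 * K\<^sup>2"
    using det_perturbation_bounds[OF small] unfolding d_def D_def K_def by auto
  have K0: "0 \<le> K"
    unfolding K_def using maxnorm_nonneg[of F] maxnorm_nonneg[of Bt] by simp
  have det_eq: "(det P)\<^sup>2 * \<beta> = d + D"
    using arg_cong[OF cong, of det] unfolding d_def \<beta>_def D_def
    by (simp add: det_transpose_congruence)
  obtain s where s: "s\<^sup>2 * \<beta> = d" and acute: "0 \<le> Re (det P * cnj s)"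
  proof -
    have "(csqrt (d / \<beta>))\<^sup>2 * \<beta> = d"
      using \<beta>0 by simp
    then show ?thesis
      using that[of "csqrt (d / \<beta>)"] that[of "- csqrt (d / \<beta>)"]
      by (cases "0 \<le> Re (det P * cnj (csqrt (d / \<beta>)))") auto
  qed
  have "cmod (det P - s) \<le> K / sqrt (cmod (d * \<beta>))"
    by (rule norm_sqrt_perturbation_le[OF det_eq s acute d0 \<beta>0 D_le D_sq K0])
  moreover have "s\<^sup>2 = d / \<beta>"
    using s \<beta>0 by (simp add: field_simps)
  ultimately show ?thesis
    unfolding K_def d_def \<beta>_def by (intro exI[of _ s] exI[of _ "det P - s"]) simp
qed

theorem lemma4p1:
  shows
  "(\<forall>(At::complex^2^2) (A::complex^2^2) (P::complex^2^2) (E::complex^2^2) (c::complex) (\<Delta>::real).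
      invertible At \<and> invertible A \<and> invertible P \<and> cmod c = 1 \<and>
      scal_mat c (conj_transpose P ** A ** P) = At + E \<and>
      maxnorm E \<le> cmod (det At) / (8 * maxnorm At + 4) \<and>
      det At / det A = of_real (cmod (det At / det A)) * cis \<Delta>
    \<longrightarrow>
      (\<exists>(k::int) (g::complex).
          c = (-1) powi k * cis (\<Delta> / 2) + g \<and>
          inverse c = (-1) powi k * cis (- \<Delta> / 2) + cnj g \<and>
          cmod g \<le> maxnorm E * (8 * maxnorm At + 4) / cmod (det At)) \<and>
      (\<exists>r::real.
          cmod (det P) = sqrt (cmod (det At / det A)) + r \<and>
          \<bar>r\<bar> \<le> maxnorm E * (4 * maxnorm At + 2) / sqrt (cmod (det At * det A))))
   \<and>
   (\<forall>(Bt::complex^2^2) (B::complex^2^2) (P::complex^2^2) (F::complex^2^2).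
      invertible Bt \<and> invertible B \<and> invertible P \<and>
      transpose P ** B ** P = Bt + F \<and>
      maxnorm F \<le> cmod (det Bt) / (8 * maxnorm Bt + 4)
    \<longrightarrow>
      (\<exists>(s::complex) (r::complex).
          s\<^sup>2 = det Bt / det B \<and>
          det P = s + r \<and>
          cmod r \<le> maxnorm F * (4 * maxnorm Bt + 2) / sqrt (cmod (det Bt * det B))))"
  apply (rule conjI; intro allI impI; elim conjE)
   apply (rule conj_congruence_det_approx; (assumption | metis invertible_det_nz))
  apply (rule transpose_congruence_det_approx; (assumption | metis invertible_det_nz))
  done

end
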